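(* For every $d \ge 1$, $\mu^\Diamond(d) \le d+1$; that is, there exist pairwise disjoint sets $\mathbf{S}_1,\dots,\mathbf{S}_{d+1}\subset\mathbb{R}^d$ with $|\mathbf{S}_i| = d+1$, in general position together with $0$, such that $0 \in \operatorname{conv}(\mathbf{S}_i\cup\mathbf{S}_j)$ for all $i \ne j$ and exactly $d+1$ colourful simplices contain $0$.
   Context: A colourful simplex is the closed simplex $\operatorname{conv}\{x_1,\dots,x_{d+1}\}$ with $x_i\in\mathbf{S}_i$ for each $i$; distinct choices of $(x_1,\dots,x_{d+1})$ count as distinct. $\mu^\Diamond(d)$ denotes the minimum, over all configurations of pairwise disjoint sets $\mathbf{S}_1,\dots,\mathbf{S}_{d+1}\subset\mathbb{R}^d$ with $|\mathbf{S}_i|=d+1$, in general position together with $0$, satisfying $0 \in \operatorname{conv}(\mathbf{S}_i \cup \mathbf{S}_j)$ for all $i\ne j$, of the number of colourful simplices containing $0$. *)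

theory Defs
  imports "HOL-Analysis.Analysis"
begin

definition in_general_position :: "'a::euclidean_space set \<Rightarrow> bool" where
  "in_general_position A \<longleftrightarrow>
     (\<forall>T \<subseteq> A. finite T \<and> card T \<le> DIM('a) + 1 \<longrightarrow> \<not> affine_dependent T)"

text \<open>Colour classes are indexed by 0..d where d = DIM('a) (i.e. d+1 colours).
  A colourful choice is an extensional function x with x i in S i for i = 0..d;
  distinct choices are counted separately.\<close>
definition colourful_choices :: "(nat \<Rightarrow> 'a::euclidean_space set) \<Rightarrow> (nat \<Rightarrow> 'a) set" where
  "colourful_choices S = PiE {..DIM('a)} S"

definition num_colourful_simplices_containing_0 :: "(nat \<Rightarrow> 'a::euclidean_space set) \<Rightarrow> nat" where
  "num_colourful_simplices_containing_0 S =
     card {x \<in> colourful_choices S. (0::'a) \<in> convex hull (x ` {..DIM('a)})}"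

end

theory Submission
  imports Defs
begin

(* Writing e 1, ..., e d for the standard basis (enumerated by a bijection e), the
   configuration is a small perturbation of the following point sets:
     colour 0:      d + 1 points near -One,
     colour k > 0:  e k itself, a point near -One - (d+1) e k, and points near
                    e m - 2 e k for the d - 1 indices m \<noteq> k.
   Colour 0 has all coordinates negative, and every point of colour k other than e k is
   "negatively dominated" in direction e k: its e k-coordinate is negative and larger in
   absolute value than the l1-norm of its other coordinates.  A supporting-hyperplane argument then shows
   that a colourful simplex contains the origin iff it uses e k for every k > 0, and
   conversely these d + 1 simplices do contain it; so exactly d + 1 simplices are counted. *)

lemma negligible_affine_hull_small:
  fixes T :: "'a::euclidean_space set"
  assumes "finite T" and "card T \<le> DIM('a)"
  shows "negligible (affine hull T)"
proof -
  have "aff_dim (affine hull T) < DIM('a)"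
    using aff_dim_le_card[OF assms(1)] assms(2) by simp
  then obtain a b where "a \<noteq> 0" "affine hull T \<subseteq> {x. a \<bullet> x = b}"
    by (rule aff_lowdim_subset_hyperplane)
  then show ?thesis
    using negligible_hyperplane negligible_subset by blast
qed

lemma in_general_position_insert:
  fixes A :: "'a::euclidean_space set"
  assumes gp: "in_general_position A"
    and avoid: "\<And>T. T \<subseteq> A \<Longrightarrow> finite T \<Longrightarrow> card T \<le> DIM('a) \<Longrightarrow> p \<notin> affine hull T"
  shows "in_general_position (insert p A)"
  unfolding in_general_position_def
proof (intro allI impI)
  fix T assume T: "T \<subseteq> insert p A" "finite T \<and> card T \<le> DIM('a) + 1"
  show "\<not> affine_dependent T"
  proof (cases "p \<in> T")
    case False
    then show ?thesis using gp T unfolding in_general_position_def by blast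
  next
    case True
    let ?T = "T - {p}"
    have T': "?T \<subseteq> A" "finite ?T" "card ?T \<le> DIM('a)"
      using T True by auto
    have "\<not> affine_dependent ?T" using gp T' unfolding in_general_position_def by simp
    then have "\<not> affine_dependent (insert p ?T)"
      using avoid[OF T'] by (rule affine_independent_insert)
    then show ?thesis using True by (simp add: insert_absorb)
  qed
qed

lemma in_general_position_extend:
  fixes A :: "'a::euclidean_space set"
  assumes "finite A" and "in_general_position A" and "r > 0"
  obtains p where "p \<in> ball c r" "p \<notin> A" "in_general_position (insert p A)"
proof -
  define small where "small = {T. T \<subseteq> A \<and> card T \<le> DIM('a)}"
  have "finite small" unfolding small_def using assms(1) by auto
  moreover have "negligible (affine hull T)" if "T \<in> small" for T
    using that assms(1) finite_subset negligible_affine_hull_small unfolding small_def by blast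
  ultimately have "negligible (\<Union>T\<in>small. affine hull T)" by (auto intro: negligible_Union)
  moreover have "\<not> negligible (ball c r)" using assms(3) by (intro open_not_negligible) auto
  ultimately obtain p where p: "p \<in> ball c r" "p \<notin> (\<Union>T\<in>small. affine hull T)"
    using negligible_subset by blast
  have "p \<notin> A"
  proof
    assume "p \<in> A"
    then have "{p} \<in> small" unfolding small_def by (simp add: DIM_positive Suc_leI)
    then show False using p(2) hull_subset by fastforce
  qed
  moreover have "in_general_position (insert p A)"
    using assms(2) p(2) unfolding small_def by (intro in_general_position_insert) blast+
  ultimately show ?thesis using p(1) that by blast
qed

lemma in_general_position_perturb:
  fixes A :: "'a::euclidean_space set" and c :: "'i \<Rightarrow> 'a"
  assumes "finite I" and "finite A" and "in_general_position A" and "r > 0"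
  obtains q where "\<forall>i\<in>I. dist (q i) (c i) < r" "inj_on q I" "q ` I \<inter> A = {}"
    "in_general_position (A \<union> q ` I)"
proof -
  have "\<exists>q. (\<forall>i\<in>I. dist (q i) (c i) < r) \<and> inj_on q I \<and> q ` I \<inter> A = {} \<and>
            in_general_position (A \<union> q ` I)"
    using assms(1)
  proof (induction I rule: finite_induct)
    case empty
    then show ?case using assms(3) by simp
  next
    case (insert i I)
    then obtain q where q: "\<forall>i\<in>I. dist (q i) (c i) < r" "inj_on q I" "q ` I \<inter> A = {}"
      "in_general_position (A \<union> q ` I)" by blast
    obtain p where p: "p \<in> ball (c i) r" "p \<notin> A \<union> q ` I"
        "in_general_position (insert p (A \<union> q ` I))"
      using in_general_position_extend[OF _ q(4) assms(4)] assms(2) insert(1) by blast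
    have img: "(q(i := p)) ` insert i I = insert p (q ` I)"
      using insert(2) by (auto simp: image_iff)
    show ?case
    proof (intro exI[of _ "q(i := p)"] conjI)
      show "\<forall>j\<in>insert i I. dist ((q(i := p)) j) (c j) < r"
        using q(1) p(1) insert(2) by (auto simp: dist_commute)
      show "inj_on (q(i := p)) (insert i I)" using q(2) p(2) insert(2) by (auto simp: inj_on_def)
      show "(q(i := p)) ` insert i I \<inter> A = {}" using img q(3) p(2) by auto
      show "in_general_position (A \<union> (q(i := p)) ` insert i I)" using img p(3) by simp
    qed
  qed
  then show ?thesis using that by blast
qed

lemma in_general_position_insert_0_Basis:
  "in_general_position (insert 0 (Basis :: 'a::euclidean_space set))"
proof -
  have "\<not> affine_dependent (insert 0 (Basis :: 'a set))"
    using affine_dependent_iff_dependent[of 0 "Basis :: 'a set"] independent_Basis by simp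
  then show ?thesis
    unfolding in_general_position_def using affine_dependent_subset by blast
qed

lemma inner_One_Basis: "b \<in> Basis \<Longrightarrow> One \<bullet> b = (1::real)"
  by (simp add: inner_sum_left inner_Basis)

lemma sum_neg_strict:
  fixes f :: "'b \<Rightarrow> real"
  assumes "finite A" "A \<noteq> {}" "\<And>x. x \<in> A \<Longrightarrow> f x < 0"
  shows "sum f A < 0"
  using sum_strict_mono[of A f "\<lambda>_. 0"] assms by simp

text \<open>If the origin is a convex combination of points on which the functional w is nonpositive,
  only points on which w vanishes are needed: they span a face of the hull.\<close>
lemma zero_in_hull_supporting_face:
  fixes X :: "'a::euclidean_space set"
  assumes "finite X" and "0 \<in> convex hull X" and "\<And>y. y \<in> X \<Longrightarrow> w \<bullet> y \<le> 0"
  shows "0 \<in> convex hull {y \<in> X. w \<bullet> y = 0}"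
proof -
  let ?F = "convex hull X \<inter> {y. w \<bullet> y = 0}"
  have "convex hull X \<subseteq> {y. w \<bullet> y \<le> 0}"
    by (rule hull_minimal) (use assms(3) in \<open>auto simp: convex_halfspace_le\<close>)
  then have face: "?F face_of convex hull X"
    by (intro face_of_Int_supporting_hyperplane_le convex_convex_hull) blast
  obtain X' where X': "X' \<subseteq> X" "?F = convex hull X'"
    by (rule face_of_convex_hull_subset[OF finite_imp_compact[OF assms(1)] face])
  have "X' \<subseteq> convex hull X'" by (rule hull_subset)
  then have "X' \<subseteq> {y \<in> X. w \<bullet> y = 0}" using X' by auto
  then have "convex hull X' \<subseteq> convex hull {y \<in> X. w \<bullet> y = 0}" by (rule hull_mono)
  moreover have "0 \<in> ?F" using assms(2) by simp
  ultimately show ?thesis using X'(2) by auto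
qed

text \<open>Basis vectors lie on the hyperplane One \<bullet> y = 1, which misses the origin.\<close>
lemma zero_notin_hull_Basis_subset:
  assumes "B \<subseteq> (Basis :: 'a::euclidean_space set)"
  shows "(0::'a) \<notin> convex hull B"
proof -
  have "convex hull B \<subseteq> {y. One \<bullet> y = 1}"
    using assms inner_One_Basis by (intro hull_minimal) (auto simp: convex_hyperplane)
  then show ?thesis by auto
qed

lemma zero_in_hull_insert_Basis:
  fixes p :: "'a::euclidean_space"
  assumes neg: "\<forall>b\<in>Basis. p \<bullet> b < 0"
  shows "0 \<in> convex hull (insert p Basis)"
proof -
  have pB: "p \<notin> Basis" using neg inner_ge_zero[of p] by force
  have "p \<bullet> One = (\<Sum>b\<in>Basis. p \<bullet> b)" by (simp add: inner_sum_right)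
  also have "\<dots> < 0" using neg by (intro sum_neg_strict) auto
  finally have s: "p \<bullet> One < 0" .
  define a where "a = 1 / (1 - p \<bullet> One)"
  have a: "a > 0" "a * (1 - p \<bullet> One) = 1" unfolding a_def using s by auto
  define u where "u y = (if y = p then a else - a * (p \<bullet> y))" for y
  show ?thesis
    unfolding convex_hull_finite[OF finite_insert[THEN iffD2, OF finite_Basis]]
  proof (intro CollectI exI[of _ u] conjI)
    show "\<forall>y\<in>insert p Basis. 0 \<le> u y"
      using a neg unfolding u_def by (auto simp: mult_nonneg_nonpos less_imp_le)
    have "sum u (insert p Basis) = a + (\<Sum>b\<in>Basis. - a * (p \<bullet> b))"
      using pB unfolding u_def by (simp add: sum.insert) (intro sum.cong refl, use pB in auto)
    also have "\<dots> = a * (1 - p \<bullet> One)"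
      by (simp add: inner_sum_right sum_negf sum_distrib_left right_diff_distrib)
    finally show "sum u (insert p Basis) = 1" using a(2) by simp
    have "(\<Sum>y\<in>insert p Basis. u y *\<^sub>R y) = a *\<^sub>R p + (\<Sum>b\<in>Basis. (- a * (p \<bullet> b)) *\<^sub>R b)"
      using pB unfolding u_def by (simp add: sum.insert) (intro sum.cong refl, use pB in auto)
    also have "\<dots> = a *\<^sub>R p - a *\<^sub>R (\<Sum>b\<in>Basis. (p \<bullet> b) *\<^sub>R b)"
      by (simp add: scaleR_sum_right sum_negf)
    finally show "(\<Sum>y\<in>insert p Basis. u y *\<^sub>R y) = 0" by (simp add: euclidean_representation)
  qed
qed

definition negatively_dominated :: "'a::euclidean_space \<Rightarrow> 'a \<Rightarrow> bool" where
  "negatively_dominated p b \<longleftrightarrow> p \<bullet> b + (\<Sum>b'\<in>Basis - {b}. \<bar>p \<bullet> b'\<bar>) < 0"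

lemma negatively_dominated_inner_sum:
  fixes p :: "'a::euclidean_space"
  assumes "negatively_dominated p b" and "b \<in> B" and "B \<subseteq> Basis"
  shows "p \<bullet> \<Sum>B < 0"
proof -
  have finB: "finite B" using assms(3) by (rule finite_subset) simp
  have "(\<Sum>b'\<in>B - {b}. p \<bullet> b') \<le> (\<Sum>b'\<in>B - {b}. \<bar>p \<bullet> b'\<bar>)"
    by (rule sum_mono) simp
  also have "\<dots> \<le> (\<Sum>b'\<in>Basis - {b}. \<bar>p \<bullet> b'\<bar>)"
    using assms(3) by (intro sum_mono2) auto
  finally have "p \<bullet> b + (\<Sum>b'\<in>B - {b}. p \<bullet> b') < 0"
    using assms(1) unfolding negatively_dominated_def by linarith
  moreover have "p \<bullet> \<Sum>B = p \<bullet> b + (\<Sum>b'\<in>B - {b}. p \<bullet> b')"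
    unfolding inner_sum_right by (rule sum.remove[OF finB assms(2)])
  ultimately show ?thesis by simp
qed

lemma colourful_choice_sign_pattern:
  fixes S :: "nat \<Rightarrow> 'a::euclidean_space set" and e :: "nat \<Rightarrow> 'a"
  assumes e: "bij_betw e {1..DIM('a)} Basis"
    and S0: "\<forall>p\<in>S 0. \<forall>b\<in>Basis. p \<bullet> b < 0"
    and Sk: "\<forall>k\<in>{1..DIM('a)}. \<forall>p\<in>S k - {e k}. negatively_dominated p (e k)"
    and x: "x \<in> PiE {..DIM('a)} S"
    and K_def: "K = {k \<in> {1..DIM('a)}. x k \<noteq> e k}" and K: "K \<noteq> {}"
    and i: "i \<le> DIM('a)"
  shows "\<Sum>(e ` K) \<bullet> x i < 0 \<or> (x i \<in> Basis \<and> \<Sum>(e ` K) \<bullet> x i = 0)"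
proof -
  let ?d = "DIM('a)" and ?w = "\<Sum>(e ` K)"
  have eB: "e k \<in> Basis" if "k \<in> {1..?d}" for k
    using bij_betwE[OF e] that by blast
  have eK: "e ` K \<subseteq> Basis" using eB unfolding K_def by blast
  have xi: "x i \<in> S i" using x i by auto
  consider "i = 0" | "i \<in> K" | "i \<in> {1..?d} - K" using i by force
  then show ?thesis
  proof cases
    case 1
    have "?w \<bullet> x i = (\<Sum>b\<in>e ` K. b \<bullet> x i)"
      by (rule inner_sum_left)
    also have "\<dots> < 0"
    proof (rule sum_neg_strict)
      show "finite (e ` K)" using eK by (rule finite_subset) simp
      show "e ` K \<noteq> {}" using K by simp
      show "b \<bullet> x i < 0" if "b \<in> e ` K" for b
      proof -
        have "x i \<bullet> b < 0" using S0 xi 1 eK that by blast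
        then show ?thesis by (simp add: inner_commute)
      qed
    qed
    finally show ?thesis ..
  next
    case 2
    then have "x i \<in> S i - {e i}" "i \<in> {1..?d}" using xi unfolding K_def by auto
    then have "negatively_dominated (x i) (e i)" using Sk by blast
    then have "x i \<bullet> ?w < 0"
      using 2 eK by (intro negatively_dominated_inner_sum) auto
    then show ?thesis by (simp add: inner_commute)
  next
    case 3
    then have xi: "x i = e i" "e i \<in> Basis" using eB unfolding K_def by auto
    have "e i \<notin> e ` K"
      using 3 inj_on_image_mem_iff[OF bij_betw_imp_inj_on[OF e]] unfolding K_def by blast
    then have "b \<in> Basis - {e i}" if "b \<in> e ` K" for b
      using that eK by blast
    then have "b \<bullet> e i = 0" if "b \<in> e ` K" for b
      using that xi(2) inner_Basis[of b "e i"] by auto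
    then have "?w \<bullet> e i = 0"
      unfolding inner_sum_left by (intro sum.neutral) blast
    then show ?thesis using xi by simp
  qed
qed

text \<open>Consequently a colourful simplex containing the origin uses e k for every k > 0: otherwise
  the origin would lie in the hull of basis vectors alone.\<close>
lemma colourful_hull_zero_forces_basis:
  fixes S :: "nat \<Rightarrow> 'a::euclidean_space set" and e :: "nat \<Rightarrow> 'a"
  assumes e: "bij_betw e {1..DIM('a)} Basis"
    and S0: "\<forall>p\<in>S 0. \<forall>b\<in>Basis. p \<bullet> b < 0"
    and Sk: "\<forall>k\<in>{1..DIM('a)}. \<forall>p\<in>S k - {e k}. negatively_dominated p (e k)"
    and x: "x \<in> PiE {..DIM('a)} S" and hull: "0 \<in> convex hull (x ` {..DIM('a)})"
  shows "\<forall>k\<in>{1..DIM('a)}. x k = e k"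
proof (rule ccontr)
  let ?d = "DIM('a)"
  define K where "K = {k \<in> {1..?d}. x k \<noteq> e k}"
  assume "\<not> (\<forall>k\<in>{1..?d}. x k = e k)"
  then have "K \<noteq> {}" unfolding K_def by auto
  note sign = colourful_choice_sign_pattern[OF e S0 Sk x K_def this]
  define w where "w = \<Sum>(e ` K)"
  have "w \<bullet> y \<le> 0" if "y \<in> x ` {..?d}" for y
    using that sign unfolding w_def by force
  then have "0 \<in> convex hull {y \<in> x ` {..?d}. w \<bullet> y = 0}"
    using hull by (intro zero_in_hull_supporting_face) auto
  moreover have "{y \<in> x ` {..?d}. w \<bullet> y = 0} \<subseteq> Basis"
    using sign unfolding w_def by force
  ultimately show False using zero_notin_hull_Basis_subset by blast
qed

lemma colourful_simplices_containing_0: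
  fixes S :: "nat \<Rightarrow> 'a::euclidean_space set" and e :: "nat \<Rightarrow> 'a"
  assumes e: "bij_betw e {1..DIM('a)} Basis"
    and S0: "\<forall>p\<in>S 0. \<forall>b\<in>Basis. p \<bullet> b < 0"
    and Sk: "\<forall>k\<in>{1..DIM('a)}. e k \<in> S k \<and> (\<forall>p\<in>S k - {e k}. negatively_dominated p (e k))"
  shows "{x \<in> colourful_choices S. 0 \<in> convex hull (x ` {..DIM('a)})} =
         PiE {..DIM('a)} (\<lambda>k. if k = 0 then S 0 else {e k})"
proof (intro set_eqI iffI)
  fix x assume "x \<in> {x \<in> colourful_choices S. 0 \<in> convex hull (x ` {..DIM('a)})}"
  then have x: "x \<in> PiE {..DIM('a)} S" and hull: "0 \<in> convex hull (x ` {..DIM('a)})"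
    unfolding colourful_choices_def by auto
  have "\<forall>k\<in>{1..DIM('a)}. \<forall>p\<in>S k - {e k}. negatively_dominated p (e k)"
    using Sk by blast
  then have "\<forall>k\<in>{1..DIM('a)}. x k = e k"
    using colourful_hull_zero_forces_basis[OF e S0 _ x hull] by blast
  then show "x \<in> PiE {..DIM('a)} (\<lambda>k. if k = 0 then S 0 else {e k})"
    using x by (auto simp: PiE_iff)
next
  fix x assume x: "x \<in> PiE {..DIM('a)} (\<lambda>k. if k = 0 then S 0 else {e k})"
  have "x i \<in> S i" if "i \<le> DIM('a)" for i
    using PiE_mem[OF x, of i] Sk that by (cases "i = 0") auto
  then have "x \<in> colourful_choices S"
    using x unfolding colourful_choices_def by (auto simp: PiE_iff)
  moreover have "x ` {..DIM('a)} = insert (x 0) Basis"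
  proof -
    have "{..DIM('a)} = insert 0 {1..DIM('a)}" by auto
    then have "x ` {..DIM('a)} = insert (x 0) (x ` {1..DIM('a)})" by simp
    also have "x ` {1..DIM('a)} = e ` {1..DIM('a)}"
    proof (rule image_cong)
      show "x k = e k" if "k \<in> {1..DIM('a)}" for k
        using PiE_mem[OF x, of k] that by auto
    qed simp
    finally show ?thesis using e by (simp add: bij_betw_def)
  qed
  moreover have "0 \<in> convex hull (insert (x 0) Basis)"
    using PiE_mem[OF x, of 0] S0 by (intro zero_in_hull_insert_Basis) auto
  ultimately show "x \<in> {x \<in> colourful_choices S. 0 \<in> convex hull (x ` {..DIM('a)})}" by simp
qed

lemma num_colourful_simplices_containing_0_eq:
  fixes S :: "nat \<Rightarrow> 'a::euclidean_space set" and e :: "nat \<Rightarrow> 'a"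
  assumes e: "bij_betw e {1..DIM('a)} Basis"
    and S0: "\<forall>p\<in>S 0. \<forall>b\<in>Basis. p \<bullet> b < 0"
    and Sk: "\<forall>k\<in>{1..DIM('a)}. e k \<in> S k \<and> (\<forall>p\<in>S k - {e k}. negatively_dominated p (e k))"
  shows "num_colourful_simplices_containing_0 S = card (S 0)"
proof -
  have "num_colourful_simplices_containing_0 S =
        (\<Prod>k\<le>DIM('a). card (if k = 0 then S 0 else {e k}))"
    unfolding num_colourful_simplices_containing_0_def colourful_simplices_containing_0[OF assms]
    by (simp add: card_PiE)
  also have "\<dots> = (\<Prod>k\<le>DIM('a). if k = 0 then card (S 0) else 1)"
    by (intro prod.cong) auto
  finally show ?thesis by (simp add: prod.delta)
qed

lemma inner_Basis_diff_le_dist: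
  fixes x y :: "'a::euclidean_space"
  assumes "b \<in> Basis"
  shows "\<bar>x \<bullet> b - y \<bullet> b\<bar> \<le> dist x y"
  using Basis_le_norm[OF assms, of "x - y"] by (simp add: inner_diff_left dist_norm)

lemma inner_lt_perturb:
  fixes x y w :: "'a::euclidean_space"
  assumes "dist x y < r" and "w \<noteq> 0"
  shows "w \<bullet> x < w \<bullet> y + norm w * r"
proof -
  have "w \<bullet> x - w \<bullet> y \<le> norm w * dist x y"
    using norm_cauchy_schwarz[of w "x - y"] by (simp add: inner_diff_right dist_norm)
  also have "\<dots> < norm w * r" using assms by simp
  finally show ?thesis by simp
qed

lemma negatively_dominated_perturb:
  fixes p c :: "'a::euclidean_space"
  assumes b: "b \<in> Basis" and close: "dist p c < r"
    and margin: "c \<bullet> b + (\<Sum>b'\<in>Basis - {b}. \<bar>c \<bullet> b'\<bar>) + real DIM('a) * r \<le> 0"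
  shows "negatively_dominated p b"
proof -
  have coord: "\<bar>p \<bullet> b' - c \<bullet> b'\<bar> < r" if "b' \<in> Basis" for b'
    using inner_Basis_diff_le_dist[OF that, of p c] close by linarith
  have "(\<Sum>b'\<in>Basis - {b}. \<bar>p \<bullet> b'\<bar>) \<le> (\<Sum>b'\<in>Basis - {b}. \<bar>c \<bullet> b'\<bar> + r)"
    using coord by (intro sum_mono) fastforce
  also have "\<dots> = (\<Sum>b'\<in>Basis - {b}. \<bar>c \<bullet> b'\<bar>) + (real DIM('a) - 1) * r"
    using b by (simp add: sum.distrib card_Diff_singleton of_nat_diff DIM_positive Suc_leI)
  finally have "(\<Sum>b'\<in>Basis - {b}. \<bar>p \<bullet> b'\<bar>) \<le>
                  (\<Sum>b'\<in>Basis - {b}. \<bar>c \<bullet> b'\<bar>) + (real DIM('a) - 1) * r" .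
  moreover have "p \<bullet> b < c \<bullet> b + r" using coord[OF b] by linarith
  ultimately show ?thesis
    using margin unfolding negatively_dominated_def by (simp add: algebra_simps)
qed

lemma norm_lt_from_coordinate_bounds:
  fixes w :: "'a::euclidean_space"
  assumes lower: "\<forall>b\<in>Basis. - \<epsilon> < w \<bullet> b" and total: "(\<Sum>b\<in>Basis. w \<bullet> b) < \<epsilon>"
    and "\<epsilon> > 0"
  shows "norm w < real DIM('a) * real DIM('a) * \<epsilon>"
proof -
  have coord: "\<bar>w \<bullet> b\<bar> < real DIM('a) * \<epsilon>" if b: "b \<in> Basis" for b
  proof -
    have "(\<Sum>b'\<in>Basis. w \<bullet> b') = w \<bullet> b + (\<Sum>b'\<in>Basis - {b}. w \<bullet> b')"
      using b by (simp add: sum.remove)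
    moreover have "(\<Sum>b'\<in>Basis - {b}. - \<epsilon>) \<le> (\<Sum>b'\<in>Basis - {b}. w \<bullet> b')"
      using lower by (intro sum_mono) (simp add: less_imp_le)
    moreover have "(\<Sum>b'\<in>Basis - {b}. - \<epsilon>) = \<epsilon> - real DIM('a) * \<epsilon>"
      using b by (simp add: card_Diff_singleton of_nat_diff DIM_positive Suc_leI algebra_simps)
    moreover have "\<epsilon> \<le> real DIM('a) * \<epsilon>"
      using \<open>\<epsilon> > 0\<close> DIM_positive[where 'a='a] by simp
    moreover have "- \<epsilon> < w \<bullet> b" using lower b by blast
    ultimately show ?thesis using total unfolding abs_less_iff by linarith
  qed
  have "norm w \<le> (\<Sum>b\<in>Basis. \<bar>w \<bullet> b\<bar>)" by (rule norm_le_l1)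
  also have "\<dots> < (\<Sum>b\<in>(Basis::'a set). real DIM('a) * \<epsilon>)"
    using coord by (intro sum_strict_mono) auto
  also have "\<dots> = real DIM('a) * real DIM('a) * \<epsilon>" by simp
  finally show ?thesis .
qed

text \<open>The centre indexed by (k, m) is the unperturbed position of the
  m-th point of colour k.  The perturbation index set lists the d + 1 points of colour 0 and
  the d points of each colour k > 0 that get perturbed; colour k > 0 also contains e k itself,
  unperturbed.\<close>
fun centre :: "(nat \<Rightarrow> 'a::euclidean_space) \<Rightarrow> nat \<times> nat \<Rightarrow> 'a" where
  "centre e (k, m) =
     (if k = 0 then - One
      else if m = k then - One - (real DIM('a) + 1) *\<^sub>R e k
      else e m - 2 *\<^sub>R e k)"

definition perturbation_index :: "nat \<Rightarrow> (nat \<times> nat) set" where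
  "perturbation_index d = {0} \<times> {..d} \<union> {1..d} \<times> {1..d}"

definition perturbation_radius :: "nat \<Rightarrow> real" where
  "perturbation_radius d = 1 / (4 * real d * real d)"

definition colour_class ::
    "(nat \<Rightarrow> 'a::euclidean_space) \<Rightarrow> (nat \<times> nat \<Rightarrow> 'a) \<Rightarrow> nat \<Rightarrow> 'a set" where
  "colour_class e q k =
     (if k = 0 then q ` ({0} \<times> {..DIM('a)}) else insert (e k) (q ` ({k} \<times> {1..DIM('a)})))"

lemma perturbation_radius_bounds:
  assumes "d \<ge> 1"
  shows "perturbation_radius d > 0" "perturbation_radius d \<le> 1 / 4"
    and "real d * perturbation_radius d \<le> 1 / 4"
    and "real d * real d * perturbation_radius d = 1 / 4"
proof -
  have d: "real d \<ge> 1" using assms by simp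
  then have "1 \<le> real d * real d" using mult_mono[OF d d] by simp
  then show "perturbation_radius d > 0" "perturbation_radius d \<le> 1 / 4"
    "real d * perturbation_radius d \<le> 1 / 4" "real d * real d * perturbation_radius d = 1 / 4"
    using d by (auto simp: perturbation_radius_def field_simps)
qed

lemma colour_class_eq:
  fixes e :: "nat \<Rightarrow> 'a::euclidean_space" and q :: "nat \<times> nat \<Rightarrow> 'a"
  assumes "k \<le> DIM('a)"
  shows "colour_class e q k =
           e ` ({k} \<inter> {1..DIM('a)}) \<union> q ` (perturbation_index DIM('a) \<inter> {k} \<times> UNIV)"
proof (cases "k = 0")
  case True
  then have "perturbation_index DIM('a) \<inter> {k} \<times> UNIV = {0} \<times> {..DIM('a)}"
    unfolding perturbation_index_def by auto
  then show ?thesis using True unfolding colour_class_def by simp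
next
  case False
  then have "perturbation_index DIM('a) \<inter> {k} \<times> UNIV = {k} \<times> {1..DIM('a)}"
    and "{k} \<inter> {1..DIM('a)} = {k}"
    using assms unfolding perturbation_index_def by auto
  then show ?thesis using False unfolding colour_class_def by simp
qed

context
  fixes e :: "nat \<Rightarrow> 'a::euclidean_space" and q :: "nat \<times> nat \<Rightarrow> 'a"
  assumes e: "bij_betw e {1..DIM('a)} Basis"
    and q_close: "\<forall>i\<in>perturbation_index DIM('a).
                    dist (q i) (centre e i) < perturbation_radius DIM('a)"
    and q_inj: "inj_on q (perturbation_index DIM('a))"
    and q_new: "q ` perturbation_index DIM('a) \<inter> insert 0 Basis = {}"
begin

private lemma e_Basis: "k \<in> {1..DIM('a)} \<Longrightarrow> e k \<in> Basis"
  using bij_betwE[OF e] by blast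

private lemma e_eq_iff:
  "k \<in> {1..DIM('a)} \<Longrightarrow> m \<in> {1..DIM('a)} \<Longrightarrow> e k = e m \<longleftrightarrow> k = m"
  using bij_betw_imp_inj_on[OF e] by (auto dest: inj_onD)

private lemma radius: "perturbation_radius DIM('a) > 0" "perturbation_radius DIM('a) \<le> 1 / 4"
    "real DIM('a) * perturbation_radius DIM('a) \<le> 1 / 4"
    "real DIM('a) * real DIM('a) * perturbation_radius DIM('a) = 1 / 4"
  using perturbation_radius_bounds[of "DIM('a)"] by (simp_all add: DIM_positive Suc_leI)

lemma colour_class_card:
  "k \<le> DIM('a) \<Longrightarrow> finite (colour_class e q k) \<and> card (colour_class e q k) = DIM('a) + 1"
proof (cases "k = 0")
  case True
  have "inj_on q ({0} \<times> {..DIM('a)})"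
    using q_inj by (rule inj_on_subset) (auto simp: perturbation_index_def)
  then show ?thesis using True by (simp add: colour_class_def card_image card_cartesian_product)
next
  case False
  assume k: "k \<le> DIM('a)"
  have sub: "{k} \<times> {1..DIM('a)} \<subseteq> perturbation_index DIM('a)"
    using False k by (auto simp: perturbation_index_def)
  have "e k \<notin> q ` ({k} \<times> {1..DIM('a)})"
    using q_new sub e_Basis[of k] False k by auto
  then show ?thesis
    using False inj_on_subset[OF q_inj sub]
    by (simp add: colour_class_def card_image card_cartesian_product)
qed

lemma colour_classes_disjoint:
  assumes "i \<le> DIM('a)" "j \<le> DIM('a)" "i \<noteq> j"
  shows "colour_class e q i \<inter> colour_class e q j = {}"
proof -
  let ?I = "perturbation_index DIM('a)"
  have "e ` ({i} \<inter> {1..DIM('a)}) \<inter> e ` ({j} \<inter> {1..DIM('a)}) = {}"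
    using e_eq_iff assms(3) by auto
  moreover have "q ` (?I \<inter> {i} \<times> UNIV) \<inter> q ` (?I \<inter> {j} \<times> UNIV) = {}"
    using inj_on_image_Int[OF q_inj, of "?I \<inter> {i} \<times> UNIV" "?I \<inter> {j} \<times> UNIV"] assms(3) by auto
  moreover have "e ` ({l} \<inter> {1..DIM('a)}) \<subseteq> Basis" for l using e_Basis by auto
  moreover have "q ` (?I \<inter> {l} \<times> UNIV) \<inter> Basis = {}" for l using q_new by auto
  ultimately show ?thesis using assms by (simp add: colour_class_eq) blast
qed

lemma colour_classes_union:
  "(\<Union>k\<le>DIM('a). colour_class e q k) = Basis \<union> q ` perturbation_index DIM('a)"
proof -
  let ?I = "perturbation_index DIM('a)"
  have "(\<Union>k\<le>DIM('a). e ` ({k} \<inter> {1..DIM('a)})) = e ` {1..DIM('a)}" by auto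
  also have "\<dots> = Basis" using e by (simp add: bij_betw_def)
  finally have E: "(\<Union>k\<le>DIM('a). e ` ({k} \<inter> {1..DIM('a)})) = Basis" .
  have "(\<Union>k\<le>DIM('a). ?I \<inter> {k} \<times> UNIV) = ?I" by (auto simp: perturbation_index_def)
  then have Q: "(\<Union>k\<le>DIM('a). q ` (?I \<inter> {k} \<times> UNIV)) = q ` ?I" by (simp flip: image_UN)
  have "(\<Union>k\<le>DIM('a). colour_class e q k) =
        (\<Union>k\<le>DIM('a). e ` ({k} \<inter> {1..DIM('a)}) \<union> q ` (?I \<inter> {k} \<times> UNIV))"
    by (rule SUP_cong[OF refl], rule colour_class_eq) simp
  also have "\<dots> = Basis \<union> q ` ?I" unfolding UN_Un_distrib E Q ..
  finally show ?thesis .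
qed

text \<open>Colour 0 lies near -One, so all its coordinates are negative.\<close>
lemma colour_class_0_negative: "\<forall>p\<in>colour_class e q 0. \<forall>b\<in>Basis. p \<bullet> b < 0"
proof (intro ballI)
  fix p b assume p: "p \<in> colour_class e q 0" and b: "(b::'a) \<in> Basis"
  then obtain m where m: "(0, m) \<in> perturbation_index DIM('a)" "p = q (0, m)"
    by (auto simp: colour_class_def perturbation_index_def)
  have "dist p (centre e (0, m)) < perturbation_radius DIM('a)" using q_close m by auto
  then have "\<bar>p \<bullet> b - centre e (0, m) \<bullet> b\<bar> < perturbation_radius DIM('a)"
    using inner_Basis_diff_le_dist[OF b, of p "centre e (0, m)"] by linarith
  moreover have "centre e (0, m) \<bullet> b = -1" using inner_One_Basis[OF b] by simp
  ultimately show "p \<bullet> b < 0" using radius(2) by linarith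
qed

text \<open>Each centre of colour k > 0 is negatively dominated in direction e k with margin 1:
  -One - (d+1) e k has margin 3, and e m - 2 e k (m \<noteq> k) has margin 1.\<close>
lemma centre_margin:
  assumes k: "k \<in> {1..DIM('a)}" and m: "m \<in> {1..DIM('a)}"
  shows "centre e (k, m) \<bullet> e k + (\<Sum>b\<in>Basis - {e k}. \<bar>centre e (k, m) \<bullet> b\<bar>) \<le> -1"
proof -
  have ek: "e k \<in> Basis" using e_Basis[OF k] .
  have ek_inner: "e k \<bullet> b = 0" if "b \<in> Basis - {e k}" for b
    using that ek by (auto simp: inner_Basis)
  show ?thesis
  proof (cases "m = k")
    case True
    have "(\<Sum>b\<in>Basis - {e k}. \<bar>centre e (k, m) \<bullet> b\<bar>) = (\<Sum>b\<in>Basis - {e k}. 1)"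
      using True k ek_inner by (intro sum.cong) (auto simp: inner_diff_left inner_One_Basis)
    also have "\<dots> = real DIM('a) - 1"
      using ek by (simp add: card_Diff_singleton of_nat_diff DIM_positive Suc_leI)
    finally show ?thesis
      using True k ek by (simp add: inner_diff_left inner_One_Basis)
  next
    case False
    have em: "e m \<in> Basis - {e k}" using e_Basis[OF m] e_eq_iff[OF k m] False by auto
    have "(\<Sum>b\<in>Basis - {e k}. \<bar>centre e (k, m) \<bullet> b\<bar>) =
          (\<Sum>b\<in>Basis - {e k}. if b = e m then 1 else 0)"
      using False k ek_inner em by (intro sum.cong) (auto simp: inner_diff_left inner_Basis)
    also have "\<dots> = 1" using em by simp
    finally show ?thesis
      using False k ek em by (simp add: inner_diff_left inner_Basis)
  qed
qed

text \<open>Hence every point of colour k > 0 other than e k is negatively dominated in direction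
  e k, the perturbation costing at most d r \<le> 1/4 of the margin.\<close>
lemma colour_class_dominated:
  assumes k: "k \<in> {1..DIM('a)}"
  shows "\<forall>p\<in>colour_class e q k - {e k}. negatively_dominated p (e k)"
proof
  fix p assume "p \<in> colour_class e q k - {e k}"
  then obtain m where m: "m \<in> {1..DIM('a)}" "p = q (k, m)"
    using k by (auto simp: colour_class_def)
  have "(k, m) \<in> perturbation_index DIM('a)" using k m by (auto simp: perturbation_index_def)
  then have "dist p (centre e (k, m)) < perturbation_radius DIM('a)" using q_close m by auto
  then show "negatively_dominated p (e k)"
    using e_Basis[OF k] centre_margin[OF k m(1)] radius(3)
    by (intro negatively_dominated_perturb) auto
qed

text \<open>A linear functional that is positive on the k-th colour class is almost nonnegative
  on every basis vector (using the centres e m - 2 e k) and has almost nonpositive total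
  (using the centre -One - (d+1) e k); the error is controlled by the perturbation radius.\<close>
lemma positive_functional_coordinate_bounds:
  assumes k: "k \<in> {1..DIM('a)}" and w: "w \<noteq> 0"
    and pos: "\<forall>y\<in>colour_class e q k. 0 < w \<bullet> y"
  shows "\<forall>b\<in>Basis. - (norm w * perturbation_radius DIM('a)) < w \<bullet> b"
    and "(\<Sum>b\<in>Basis. w \<bullet> b) < norm w * perturbation_radius DIM('a)"
proof -
  define \<epsilon> where "\<epsilon> = norm w * perturbation_radius DIM('a)"
  have \<epsilon>: "\<epsilon> > 0" using w radius(1) by (simp add: \<epsilon>_def)
  have near: "0 < w \<bullet> centre e (k, m) + \<epsilon>" if m: "m \<in> {1..DIM('a)}" for m
  proof -
    have "(k, m) \<in> perturbation_index DIM('a)" using k m by (auto simp: perturbation_index_def)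
    then have "w \<bullet> q (k, m) < w \<bullet> centre e (k, m) + \<epsilon>"
      unfolding \<epsilon>_def using q_close w by (intro inner_lt_perturb) auto
    moreover have "0 < w \<bullet> q (k, m)" using pos k m by (simp add: colour_class_def)
    ultimately show ?thesis by linarith
  qed
  have wk: "0 < w \<bullet> e k" using pos k by (simp add: colour_class_def)
  show "\<forall>b\<in>Basis. - \<epsilon> < w \<bullet> b"
  proof
    fix b :: 'a assume "b \<in> Basis"
    then have "b \<in> e ` {1..DIM('a)}" using e by (simp add: bij_betw_def)
    then obtain m where m: "m \<in> {1..DIM('a)}" "b = e m" by blast
    show "- \<epsilon> < w \<bullet> b"
    proof (cases "m = k")
      case True then show ?thesis using m wk \<epsilon> by simp
    next
      case False
      then show ?thesis using near[OF m(1)] m wk k by (simp add: inner_diff_right)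
    qed
  qed
  have "0 < - (w \<bullet> One) - (real DIM('a) + 1) * (w \<bullet> e k) + \<epsilon>"
    using near[OF k] k by (simp add: inner_diff_right)
  moreover have "w \<bullet> One = (\<Sum>b\<in>Basis. w \<bullet> b)" by (simp add: inner_sum_right)
  moreover have "0 < (real DIM('a) + 1) * (w \<bullet> e k)" using wk by simp
  ultimately show "(\<Sum>b\<in>Basis. w \<bullet> b) < \<epsilon>" by linarith
qed

text \<open>Each colour class k > 0 surrounds the origin: a separating functional would be
  positive on the class, but then its norm is below a quarter of itself.\<close>
lemma zero_in_hull_colour_class:
  assumes k: "k \<in> {1..DIM('a)}"
  shows "0 \<in> convex hull (colour_class e q k)"
proof (rule ccontr)
  let ?S = "colour_class e q k" and ?r = "perturbation_radius DIM('a)"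
  assume "0 \<notin> convex hull ?S"
  moreover have "closed (convex hull ?S)"
    by (simp add: colour_class_def compact_imp_closed finite_imp_compact_convex_hull)
  ultimately obtain w \<beta> where w: "w \<noteq> 0" "0 < \<beta>" "\<forall>x\<in>convex hull ?S. \<beta> < w \<bullet> x"
    using separating_hyperplane_closed_0[OF convex_convex_hull] by blast
  have "\<forall>y\<in>?S. 0 < w \<bullet> y"
    using w hull_subset[of ?S convex] by force
  note bounds = positive_functional_coordinate_bounds[OF k w(1) this]
  have "norm w < real DIM('a) * real DIM('a) * (norm w * ?r)"
    using w(1) radius(1) by (intro norm_lt_from_coordinate_bounds[OF bounds]) simp
  also have "\<dots> = norm w / 4" using radius(4) by simp
  finally show False using w(1) by simp
qed

text \<open>The origin lies in the hull of any two distinct colour classes, since at least one of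
  them has positive index.\<close>
lemma zero_in_hull_colour_class_pair:
  assumes "i \<le> DIM('a)" "j \<le> DIM('a)" "i \<noteq> j"
  shows "0 \<in> convex hull (colour_class e q i \<union> colour_class e q j)"
proof -
  have "i \<in> {1..DIM('a)} \<or> j \<in> {1..DIM('a)}" using assms by auto
  then obtain k where "k \<in> {i, j}" "k \<in> {1..DIM('a)}" by blast
  then have "0 \<in> convex hull (colour_class e q k)" by (intro zero_in_hull_colour_class)
  moreover have "convex hull (colour_class e q k) \<subseteq>
                 convex hull (colour_class e q i \<union> colour_class e q j)"
    using \<open>k \<in> {i, j}\<close> by (intro hull_mono) auto
  ultimately show ?thesis by blast
qed

lemma num_colourful_simplices_colour_classes:
  "num_colourful_simplices_containing_0 (colour_class e q) = DIM('a) + 1"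
proof -
  have "\<forall>k\<in>{1..DIM('a)}. e k \<in> colour_class e q k \<and>
          (\<forall>p\<in>colour_class e q k - {e k}. negatively_dominated p (e k))"
    using colour_class_dominated by (auto simp: colour_class_def)
  then have "num_colourful_simplices_containing_0 (colour_class e q) = card (colour_class e q 0)"
    by (rule num_colourful_simplices_containing_0_eq[of e "colour_class e q",
          OF e colour_class_0_negative])
  also have "\<dots> = DIM('a) + 1" using colour_class_card[of 0] by simp
  finally show ?thesis .
qed

end

theorem mainTheorem4:
  "\<exists>S :: nat \<Rightarrow> 'a::euclidean_space set.
     (\<forall>i\<le>DIM('a). finite (S i) \<and> card (S i) = DIM('a) + 1) \<and>
     (\<forall>i\<le>DIM('a). \<forall>j\<le>DIM('a). i \<noteq> j \<longrightarrow> S i \<inter> S j = {}) \<and>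
     (0::'a) \<notin> (\<Union>i\<le>DIM('a). S i) \<and>
     in_general_position (insert 0 (\<Union>i\<le>DIM('a). S i)) \<and>
     (\<forall>i\<le>DIM('a). \<forall>j\<le>DIM('a). i \<noteq> j \<longrightarrow> (0::'a) \<in> convex hull (S i \<union> S j)) \<and>
     num_colourful_simplices_containing_0 S = DIM('a) + 1"
proof -
  let ?I = "perturbation_index DIM('a)"
  obtain e :: "nat \<Rightarrow> 'a" where e: "bij_betw e {1..DIM('a)} Basis"
    using finite_same_card_bij[of "{1..DIM('a)}" "Basis :: 'a set"] by auto
  have fin: "finite ?I" by (simp add: perturbation_index_def)
  have r: "perturbation_radius DIM('a) > 0"
    using perturbation_radius_bounds(1)[of "DIM('a)"] by (simp add: DIM_positive Suc_leI)
  obtain q where q: "\<forall>i\<in>?I. dist (q i) (centre e i) < perturbation_radius DIM('a)"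
      "inj_on q ?I" "q ` ?I \<inter> insert 0 Basis = {}"
      and gp: "in_general_position (insert 0 Basis \<union> q ` ?I)"
    using in_general_position_perturb[OF fin finite_insert[THEN iffD2, OF finite_Basis]
        in_general_position_insert_0_Basis r, of "centre e"] by blast
  note union = colour_classes_union[OF e q]
  show ?thesis
  proof (intro exI[of _ "colour_class e q"] conjI allI impI)
    show "finite (colour_class e q i)" and "card (colour_class e q i) = DIM('a) + 1"
      if "i \<le> DIM('a)" for i using colour_class_card[OF e q that] by simp_all
    show "colour_class e q i \<inter> colour_class e q j = {}"
      if "i \<le> DIM('a)" "j \<le> DIM('a)" "i \<noteq> j" for i j
      using colour_classes_disjoint[OF e q that] .
    show "0 \<notin> (\<Union>i\<le>DIM('a). colour_class e q i)"
      unfolding union using q(3) nonzero_Basis by blast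
    show "in_general_position (insert 0 (\<Union>i\<le>DIM('a). colour_class e q i))"
      unfolding union using gp by (simp add: insert_commute)
    show "0 \<in> convex hull (colour_class e q i \<union> colour_class e q j)"
      if "i \<le> DIM('a)" "j \<le> DIM('a)" "i \<noteq> j" for i j
      using zero_in_hull_colour_class_pair[OF e q that] .
    show "num_colourful_simplices_containing_0 (colour_class e q) = DIM('a) + 1"
      by (rule num_colourful_simplices_colour_classes[OF e q])
  qed
qed

end
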